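(* Let $a\ge 2$ be an integer, $B=(1,a,a+1)$ and let $M>0$ be an integer. If $(a+1)\nmid M$ and $M\ge a\left(\lfloor \frac{M}{a+1}\rfloor+1\right)$, then $O_B(M)=1+\lfloor \frac{M}{a+1}\rfloor$. Otherwise, $O_B(M)=M-a\lfloor \frac{M}{a+1}\rfloor$.
   Context: $\mathbb{N}=\{0,1,2,\dots\}$. For $B=(b_1,\dots,b_k)$ of positive integers and an integer $M$, $O_B(M)=\min\{\sum_{i=1}^k x_i : \sum_{i=1}^k b_ix_i=M,\ x_i\in\mathbb{N}\}$. *)

theory Defs
  imports Main
begin

definition O_B :: "int list \<Rightarrow> int \<Rightarrow> int" where
  "O_B B M = Min {int (sum_list x) | x :: nat list.
       length x = length B \<and> (\<Sum>i<length B. B ! i * int (x ! i)) = M}"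

end

theory Submission
  imports Defs
begin

text \<open>Write \<open>M = (a+1) q + r\<close> with \<open>0 \<le> r \<le> a\<close>. A representation
  \<open>x\<^sub>0 + a x\<^sub>1 + (a+1) x\<^sub>2 = M\<close> with \<open>s\<close> coins satisfies \<open>(a+1) s \<ge> M\<close>, and since
  \<open>M \<equiv> x\<^sub>0 + x\<^sub>2 (mod a)\<close> also \<open>s \<ge> x\<^sub>0 + x\<^sub>2 \<ge> M mod a\<close>. The first bound gives
  \<open>s \<ge> q\<close>, or \<open>s \<ge> q + 1\<close> when \<open>r > 0\<close>; the second gives \<open>s \<ge> q + r\<close> when
  \<open>q + r < a\<close>. The bounds are attained by \<open>(r, 0, q)\<close> and, when \<open>r > 0\<close> and
  \<open>q + r \<ge> a\<close>, by \<open>(0, a + 1 - r, q + r - a)\<close>.\<close>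

definition representation_sizes :: "int \<Rightarrow> int \<Rightarrow> int \<Rightarrow> int \<Rightarrow> int set" where
  "representation_sizes b\<^sub>0 b\<^sub>1 b\<^sub>2 M =
     {int x\<^sub>0 + int x\<^sub>1 + int x\<^sub>2 | x\<^sub>0 x\<^sub>1 x\<^sub>2. b\<^sub>0 * int x\<^sub>0 + b\<^sub>1 * int x\<^sub>1 + b\<^sub>2 * int x\<^sub>2 = M}"

lemma O_B_three_eq_Min:
  "O_B [b\<^sub>0, b\<^sub>1, b\<^sub>2] M = Min (representation_sizes b\<^sub>0 b\<^sub>1 b\<^sub>2 M)"
proof -
  let ?B = "[b\<^sub>0, b\<^sub>1, b\<^sub>2]"
  have "{int (sum_list x) | x :: nat list.
           length x = length ?B \<and> (\<Sum>i<length ?B. ?B ! i * int (x ! i)) = M}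
        = representation_sizes b\<^sub>0 b\<^sub>1 b\<^sub>2 M" (is "?L = ?R")
  proof
    show "?L \<subseteq> ?R"
    proof
      fix s assume "s \<in> ?L"
      then obtain x :: "nat list" where x: "length x = length ?B" "s = int (sum_list x)"
        "(\<Sum>i<length ?B. ?B ! i * int (x ! i)) = M" by blast
      then obtain x\<^sub>0 x\<^sub>1 x\<^sub>2 where "x = [x\<^sub>0, x\<^sub>1, x\<^sub>2]"
        by (auto simp: length_Suc_conv)
      with x show "s \<in> ?R"
        by (auto simp: representation_sizes_def numeral_3_eq_3 lessThan_Suc add_ac)
    qed
  next
    show "?R \<subseteq> ?L"
    proof
      fix s assume "s \<in> ?R"
      then obtain x\<^sub>0 x\<^sub>1 x\<^sub>2 where "s = int x\<^sub>0 + int x\<^sub>1 + int x\<^sub>2"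
        "b\<^sub>0 * int x\<^sub>0 + b\<^sub>1 * int x\<^sub>1 + b\<^sub>2 * int x\<^sub>2 = M"
        by (auto simp: representation_sizes_def)
      then show "s \<in> ?L"
        by (intro CollectI exI[of _ "[x\<^sub>0, x\<^sub>1, x\<^sub>2]"]) (simp add: numeral_3_eq_3 lessThan_Suc)
    qed
  qed
  then show ?thesis
    unfolding O_B_def by simp
qed

lemma representation_sizes_subset:
  assumes "b\<^sub>0 \<ge> 1" "b\<^sub>1 \<ge> 1" "b\<^sub>2 \<ge> 1"
  shows "representation_sizes b\<^sub>0 b\<^sub>1 b\<^sub>2 M \<subseteq> {0..M}"
proof
  fix s assume "s \<in> representation_sizes b\<^sub>0 b\<^sub>1 b\<^sub>2 M"
  then obtain x\<^sub>0 x\<^sub>1 x\<^sub>2 where s: "s = int x\<^sub>0 + int x\<^sub>1 + int x\<^sub>2"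
    and M: "b\<^sub>0 * int x\<^sub>0 + b\<^sub>1 * int x\<^sub>1 + b\<^sub>2 * int x\<^sub>2 = M"
    by (auto simp: representation_sizes_def)
  have "int x\<^sub>0 \<le> b\<^sub>0 * int x\<^sub>0" "int x\<^sub>1 \<le> b\<^sub>1 * int x\<^sub>1" "int x\<^sub>2 \<le> b\<^sub>2 * int x\<^sub>2"
    using assms mult_right_mono[of 1 _ "int _"] by auto
  then show "s \<in> {0..M}"
    using s M by auto
qed

lemma finite_representation_sizes:
  assumes "b\<^sub>0 \<ge> 1" "b\<^sub>1 \<ge> 1" "b\<^sub>2 \<ge> 1"
  shows "finite (representation_sizes b\<^sub>0 b\<^sub>1 b\<^sub>2 M)"
  using finite_subset[OF representation_sizes_subset[OF assms]] by simp

lemma representation_size_bounds: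
  fixes a :: int
  assumes "a \<ge> 0" and "s \<in> representation_sizes 1 a (a + 1) M"
  shows "M \<le> (a + 1) * s" and "M mod a \<le> s"
proof -
  obtain x\<^sub>0 x\<^sub>1 x\<^sub>2 where s: "s = int x\<^sub>0 + int x\<^sub>1 + int x\<^sub>2"
    and M: "int x\<^sub>0 + a * int x\<^sub>1 + (a + 1) * int x\<^sub>2 = M"
    using assms(2) by (auto simp: representation_sizes_def)
  have "(a + 1) * s - M = a * int x\<^sub>0 + int x\<^sub>1"
    using s M by (simp add: algebra_simps)
  moreover have "0 \<le> a * int x\<^sub>0 + int x\<^sub>1"
    using \<open>a \<ge> 0\<close> by simp
  ultimately show "M \<le> (a + 1) * s"
    by linarith
  have "M = (int x\<^sub>0 + int x\<^sub>2) + a * (int x\<^sub>1 + int x\<^sub>2)"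
    using M by (simp add: algebra_simps)
  then have "M mod a = (int x\<^sub>0 + int x\<^sub>2) mod a"
    by simp
  also have "\<dots> \<le> int x\<^sub>0 + int x\<^sub>2"
    by (simp add: zmod_le_nonneg_dividend)
  finally show "M mod a \<le> s"
    using s by simp
qed

definition O_B_closed_form :: "int \<Rightarrow> int \<Rightarrow> int \<Rightarrow> int" where
  "O_B_closed_form a q r = (if r \<noteq> 0 \<and> a \<le> q + r then q + 1 else q + r)"

lemma O_B_closed_form_le:
  fixes a q r s :: int
  assumes "a \<ge> 1" "0 \<le> r"
    and "(a + 1) * q + r \<le> (a + 1) * s" and "((a + 1) * q + r) mod a \<le> s"
  shows "O_B_closed_form a q r \<le> s"
proof -
  have "(a + 1) * q \<le> (a + 1) * s"
    using assms(2,3) by linarith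
  then have "q \<le> s"
    using assms(1) by simp
  moreover have "q < s" if "r \<noteq> 0"
  proof -
    have "(a + 1) * q < (a + 1) * s"
      using assms(2,3) that by linarith
    then show ?thesis
      using assms(1) by simp
  qed
  moreover have "q + r \<le> s" if "q + r < a"
  proof -
    have "((a + 1) * q + r) mod a = (q + r + q * a) mod a"
      by (simp add: algebra_simps)
    then have "((a + 1) * q + r) mod a = (q + r) mod a"
      by (simp only: mod_mult_self1)
    then show ?thesis
      using assms(1,4) that by (smt (verit) mod_pos_pos_trivial pos_mod_sign)
  qed
  ultimately show ?thesis
    unfolding O_B_closed_form_def by auto
qed

lemma O_B_closed_form_in_representation_sizes:
  fixes a q r :: int
  assumes "0 \<le> q" "0 \<le> r" "r \<le> a"
  shows "O_B_closed_form a q r \<in> representation_sizes 1 a (a + 1) ((a + 1) * q + r)"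
proof (cases "r \<noteq> 0 \<and> a \<le> q + r")
  case True
  have "1 * int 0 + a * int (nat (a + 1 - r)) + (a + 1) * int (nat (q + r - a)) = (a + 1) * q + r"
    and "q + 1 = int 0 + int (nat (a + 1 - r)) + int (nat (q + r - a))"
    using True assms by (simp_all add: algebra_simps)
  then have "q + 1 \<in> representation_sizes 1 a (a + 1) ((a + 1) * q + r)"
    unfolding representation_sizes_def by blast
  then show ?thesis
    unfolding O_B_closed_form_def if_P[OF True] .
next
  case False
  have "1 * int (nat r) + a * int 0 + (a + 1) * int (nat q) = (a + 1) * q + r"
    and "q + r = int (nat r) + int 0 + int (nat q)"
    using assms by (simp_all add: algebra_simps)
  then have "q + r \<in> representation_sizes 1 a (a + 1) ((a + 1) * q + r)"
    unfolding representation_sizes_def by blast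
  then show ?thesis
    unfolding O_B_closed_form_def if_not_P[OF False] .
qed

lemma O_B_closed_form_div_mod:
  fixes a M :: int
  shows "O_B_closed_form a (M div (a + 1)) (M mod (a + 1)) =
    (if \<not> (a + 1) dvd M \<and> M \<ge> a * (M div (a + 1) + 1)
     then 1 + M div (a + 1)
     else M - a * (M div (a + 1)))"
proof -
  define q where "q = M div (a + 1)"
  define r where "r = M mod (a + 1)"
  have "M = (a + 1) * q + r"
    unfolding q_def r_def by simp
  then have "M \<ge> a * (q + 1) \<longleftrightarrow> a \<le> q + r" and "M - a * q = q + r"
    by (simp_all add: algebra_simps)
  moreover have "(a + 1) dvd M \<longleftrightarrow> r = 0"
    unfolding r_def by (rule dvd_eq_mod_eq_0)
  ultimately show ?thesis
    unfolding O_B_closed_form_def q_def[symmetric] r_def[symmetric] by (simp add: add.commute)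
qed

theorem mainTheorem2:
  fixes a M :: int
  assumes "a \<ge> 2" and "M > 0"
  shows "O_B [1, a, a + 1] M =
    (if \<not> (a + 1) dvd M \<and> M \<ge> a * (M div (a + 1) + 1)
     then 1 + M div (a + 1)
     else M - a * (M div (a + 1)))"
proof -
  define q where "q = M div (a + 1)"
  define r where "r = M mod (a + 1)"
  have M: "M = (a + 1) * q + r"
    unfolding q_def r_def by simp
  have q: "0 \<le> q" and r: "0 \<le> r" "r \<le> a"
    using assms pos_mod_bound[of "a + 1" M] unfolding q_def r_def
    by (simp_all add: pos_imp_zdiv_nonneg_iff)
  have "O_B [1, a, a + 1] M = Min (representation_sizes 1 a (a + 1) M)"
    by (rule O_B_three_eq_Min)
  also have "\<dots> = O_B_closed_form a q r"
  proof (rule Min_eqI)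
    show "finite (representation_sizes 1 a (a + 1) M)"
      using assms by (intro finite_representation_sizes) simp_all
    show "O_B_closed_form a q r \<le> s" if "s \<in> representation_sizes 1 a (a + 1) M" for s
      using O_B_closed_form_le[OF _ r(1)] representation_size_bounds[OF _ that] assms M by simp
    show "O_B_closed_form a q r \<in> representation_sizes 1 a (a + 1) M"
      using O_B_closed_form_in_representation_sizes[OF q r] M by simp
  qed
  also have "\<dots> = (if \<not> (a + 1) dvd M \<and> M \<ge> a * (M div (a + 1) + 1)
                     then 1 + M div (a + 1) else M - a * (M div (a + 1)))"
    unfolding q_def r_def by (rule O_B_closed_form_div_mod)
  finally show ?thesis .
qed

end
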